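(* Let $n$ be a natural number, $P$ a polytope, and $f\in\operatorname{vert}(P,\triangle_n)$. Then there exists a face $G\subset\triangle_n$ such that $\dim f(P)=\dim G$, $f(P)\subset G$, and every facet of $G$ contains a facet of $f(P)$.
   Context: For convex polytopes $P,Q$, $\operatorname{Hom}(P,Q)$ is the set of maps $P\to Q$ that are restrictions of affine maps $\operatorname{Aff}(P)\to\operatorname{Aff}(Q)$; it is a convex polytope in the affine space of affine maps $\operatorname{Aff}(P)\to\operatorname{Aff}(Q)$, and $\operatorname{vert}(P,Q)$ denotes its set of vertices. $\triangle_n=\operatorname{conv}(0,e_1,\ldots,e_n)\subset\mathbb{R}^n$. A facet of a polytope is a face of codimension one in it. *)

theory Defs
  imports "HOL-Analysis.Analysis"
begin

definition std_simplex :: "(real ^ 'n) set" where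
  "std_simplex = convex hull (insert 0 {axis i 1 | i. True})"

text \<open>A map is represented extensionally: as a function which is 0 outside P
  (so that a map on P corresponds to exactly one HOL function).
  Affine maps Aff(P) -> Aff(Q) are exactly restrictions of affine maps of the
  ambient spaces, i.e. x |-> h x + c with h linear.\<close>
definition Hom :: "'a::euclidean_space set \<Rightarrow> 'b::euclidean_space set \<Rightarrow> ('a \<Rightarrow> 'b) set" where
  "Hom P Q = {f. (\<forall>x\<in>P. f x \<in> Q) \<and>
                 (\<exists>h c. linear h \<and> (\<forall>x\<in>P. f x = h x + c)) \<and>
                 (\<forall>x. x \<notin> P \<longrightarrow> f x = 0)}"

definition vert :: "'a::euclidean_space set \<Rightarrow> 'b::euclidean_space set \<Rightarrow> ('a \<Rightarrow> 'b) set" where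
  "vert P Q = {f \<in> Hom P Q. \<forall>g\<in>Hom P Q. \<forall>h\<in>Hom P Q. \<forall>u::real.
                 0 < u \<and> u < 1 \<and> f = (\<lambda>x. u *\<^sub>R g x + (1 - u) *\<^sub>R h x) \<longrightarrow> g = h}"

end

theory Submission
  imports Defs
begin

text \<open>Let \<open>S\<close> be the set of vertices of the simplex whose barycentric coordinate does not vanish
  identically on \<open>f(P)\<close>, and \<open>G\<close> the face they span, so that \<open>f(P) \<subseteq> G\<close>. The heart of the proof
  is a rigidity property of a vertex \<open>f\<close> of \<open>Hom(P, \<triangle>)\<close>: if an affine function \<open>\<phi>\<close> vanishes on
  \<open>f(P) \<inter> {\<lambda>\<^sub>j = 0}\<close>, then \<open>\<phi>(e\<^sub>i) = 0\<close> for every \<open>i \<in> S\<close> other than \<open>j\<close>. Otherwise the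
  affine vector field \<open>D = \<Sum>\<^sub>l \<phi>(e\<^sub>l) \<lambda>\<^sub>l (e\<^sub>l - e\<^sub>j)\<close> does not move any active constraint of
  \<open>f\<close>, so \<open>f \<pm> t D \<circ> f\<close> lie in \<open>Hom(P, \<triangle>)\<close> for small \<open>t\<close>, although \<open>D \<circ> f \<noteq> 0\<close>. With \<open>\<phi>\<close>
  vanishing on all of \<open>f(P)\<close> this shows that \<open>S\<close> lies in the affine hull of \<open>f(P)\<close>, hence
  \<open>dim f(P) = |S| - 1 = dim G\<close>. Every facet of \<open>G\<close> is spanned by \<open>S - {j}\<close> for some \<open>j\<close>, and applied
  to the face \<open>f(P) \<inter> {\<lambda>\<^sub>j = 0}\<close> of \<open>f(P)\<close> the rigidity property shows that this face has
  dimension \<open>|S| - 2\<close>, i.e. is a facet of \<open>f(P)\<close>; it lies in the facet of \<open>G\<close>.\<close>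

section \<open>Vertices of Hom into a polyhedron\<close>

lemma affine_hull_separation:
  fixes Z :: "'a::euclidean_space set"
  assumes "v \<notin> affine hull Z"
  obtains w b where "\<forall>y\<in>Z. w \<bullet> y + b = 0" "w \<bullet> v + b \<noteq> 0"
proof (cases "Z = {}")
  case True
  then show ?thesis
    using that[of 0 1] by simp
next
  case False
  then obtain q where q: "q \<in> Z" by blast
  let ?W = "span ((\<lambda>x. -q + x) ` (Z - {q}))"
  obtain y z where y: "y \<in> ?W" and z: "\<And>u. u \<in> ?W \<Longrightarrow> orthogonal z u" and vq: "v - q = y + z"
    using orthogonal_subspace_decomp_exists[of ?W "v - q"] by (metis span_span)
  have "z \<noteq> 0"
  proof
    assume "z = 0"
    then have "v = q + y" using vq by (simp add: algebra_simps)
    then show False using assms y affine_hull_span2[OF q] by auto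
  qed
  have "z \<bullet> (y' - q) = 0" if "y' \<in> Z" for y'
  proof -
    have "y' - q \<in> ?W"
      using that by (cases "y' = q") (auto intro!: span_base image_eqI[where x=y'] simp: span_zero)
    then show ?thesis using z orthogonal_def by blast
  qed
  moreover have "z \<bullet> (v - q) \<noteq> 0"
    using vq z[OF y] \<open>z \<noteq> 0\<close> by (simp add: inner_add_right orthogonal_def)
  ultimately show ?thesis
    using that[of z "- (z \<bullet> q)"] by (auto simp: inner_diff_right)
qed

lemma small_perturbation_nonneg:
  fixes s d :: "'i \<Rightarrow> real"
  assumes "finite K" "\<And>k. k \<in> K \<Longrightarrow> 0 \<le> s k" "\<And>k. k \<in> K \<Longrightarrow> s k = 0 \<Longrightarrow> d k = 0"
  obtains \<epsilon> where "0 < \<epsilon>" "\<And>t k. \<bar>t\<bar> \<le> \<epsilon> \<Longrightarrow> k \<in> K \<Longrightarrow> 0 \<le> s k + t * d k"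
proof -
  have "eventually (\<lambda>t. 0 \<le> s k + t * d k) (nhds 0)" if "k \<in> K" for k
  proof (cases "s k = 0")
    case True
    then show ?thesis using assms(3)[OF that] by simp
  next
    case False
    then have "0 < s k" using assms(2)[OF that] by simp
    moreover have "((\<lambda>t. s k + t * d k) \<longlongrightarrow> s k) (nhds 0)"
      by (auto intro!: tendsto_eq_intros filterlim_ident)
    ultimately have "eventually (\<lambda>t. 0 < s k + t * d k) (nhds 0)"
      by (simp add: order_tendstoD(1))
    then show ?thesis
      by (rule eventually_mono) simp
  qed
  then have "eventually (\<lambda>t. \<forall>k\<in>K. 0 \<le> s k + t * d k) (nhds 0)"
    using assms(1) by (intro eventually_ball_finite) auto
  then obtain r where "0 < r" "\<And>t. dist t 0 < r \<Longrightarrow> \<forall>k\<in>K. 0 \<le> s k + t * d k"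
    by (auto simp: eventually_nhds_metric)
  then show ?thesis
    using that[of "r / 2"] by auto
qed

lemma convex_hull_image_affine:
  assumes "linear h" "\<forall>x\<in>convex hull V. f x = h x + c"
  shows "f ` (convex hull V) = convex hull (f ` V)"
proof -
  have "\<forall>x\<in>V. f x = c + h x"
    using assms(2) hull_subset[of V convex] by (auto simp: add.commute)
  then have "convex hull (f ` V) = (\<lambda>x. c + x) ` h ` (convex hull V)"
    by (simp add: convex_hull_linear_image[OF assms(1)] convex_hull_translation[symmetric]
        image_image cong: image_cong)
  also have "\<dots> = f ` (convex hull V)"
    using assms(2) by (auto simp: image_image add.commute cong: image_cong)
  finally show ?thesis ..
qed

lemma convex_image_Hom:
  assumes "polytope P" "f \<in> Hom P Q"
  shows "convex (f ` P)"
proof -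
  obtain V where "P = convex hull V"
    using assms(1) by (auto simp: polytope_def)
  moreover obtain h c where "linear h" "\<forall>x\<in>P. f x = h x + c"
    using assms(2) by (auto simp: Hom_def)
  ultimately show ?thesis
    using convex_hull_image_affine[of h V f c] by simp
qed

lemma convex_polyhedron_inner: "convex {y. \<forall>i\<in>I. 0 \<le> a i \<bullet> y + b i}"
proof -
  have "{y. \<forall>i\<in>I. 0 \<le> a i \<bullet> y + b i} = (\<Inter>i\<in>I. {y. - b i \<le> a i \<bullet> y})"
    by fastforce
  then show ?thesis
    by (simp add: convex_INT convex_halfspace_ge)
qed

lemma vert_Hom_midpoint_eq:
  assumes "f \<in> vert P Q" "g \<in> Hom P Q" "h \<in> Hom P Q"
    and "f = (\<lambda>x. (1/2) *\<^sub>R g x + (1/2) *\<^sub>R h x)"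
  shows "g = h"
proof -
  have "\<forall>g\<in>Hom P Q. \<forall>h\<in>Hom P Q. \<forall>u::real.
      0 < u \<and> u < 1 \<and> f = (\<lambda>x. u *\<^sub>R g x + (1 - u) *\<^sub>R h x) \<longrightarrow> g = h"
    using assms(1) unfolding vert_def by blast
  from this[rule_format, OF assms(2,3), of "1/2"] show ?thesis
    using assms(4) by simp
qed

lemma vert_Hom_tangent_direction_eq_0:
  fixes f :: "'a::euclidean_space \<Rightarrow> 'b::euclidean_space" and L :: "'b \<Rightarrow> 'b"
    and I :: "'i set" and a :: "'i \<Rightarrow> 'b" and b :: "'i \<Rightarrow> real"
  defines "Q \<equiv> {y. \<forall>i\<in>I. 0 \<le> a i \<bullet> y + b i}"
  assumes "polytope P" "finite I" and vert: "f \<in> vert P Q" and "linear L"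
    and tangent: "\<And>x i. x \<in> P \<Longrightarrow> i \<in> I \<Longrightarrow> a i \<bullet> f x + b i = 0 \<Longrightarrow> a i \<bullet> (L (f x) + e) = 0"
    and "x \<in> P"
  shows "L (f x) + e = 0"
proof -
  obtain V where V: "finite V" "P = convex hull V"
    using assms(2) by (auto simp: polytope_def)
  have f: "f \<in> Hom P Q"
    using vert by (simp add: vert_def)
  then obtain h c where h: "linear h" "\<forall>x\<in>P. f x = h x + c"
    by (auto simp: Hom_def)
  have VP: "V \<subseteq> P"
    using V(2) by (simp add: hull_subset)
  obtain \<epsilon> where \<epsilon>: "0 < \<epsilon>"
    and small: "\<And>t v i. \<bar>t\<bar> \<le> \<epsilon> \<Longrightarrow> v \<in> V \<Longrightarrow> i \<in> I \<Longrightarrow>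
                  0 \<le> (a i \<bullet> f v + b i) + t * (a i \<bullet> (L (f v) + e))"
  proof (rule small_perturbation_nonneg[of "V \<times> I" "\<lambda>(v, i). a i \<bullet> f v + b i"
                                          "\<lambda>(v, i). a i \<bullet> (L (f v) + e)"])
    show "finite (V \<times> I)"
      using V(1) assms(3) by simp
    show "\<And>k. k \<in> V \<times> I \<Longrightarrow> 0 \<le> (case k of (v, i) \<Rightarrow> a i \<bullet> f v + b i)"
      using f VP by (auto simp: Hom_def Q_def)
    show "\<And>k. k \<in> V \<times> I \<Longrightarrow> (case k of (v, i) \<Rightarrow> a i \<bullet> f v + b i) = 0 \<Longrightarrow>
              (case k of (v, i) \<Rightarrow> a i \<bullet> (L (f v) + e)) = 0"
      using tangent VP by auto
  qed (auto intro: that)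
  define g where "g t x = (if x \<in> P then f x + t *\<^sub>R (L (f x) + e) else 0)" for t x
  have g_Hom: "g t \<in> Hom P Q" if "\<bar>t\<bar> \<le> \<epsilon>" for t
  proof -
    have lin: "linear (\<lambda>x. h x + t *\<^sub>R L (h x))"
      using h(1) \<open>linear L\<close>
      by (intro linearI) (simp_all add: linear_add linear_cmul algebra_simps)
    have aff: "\<forall>x\<in>P. g t x = (h x + t *\<^sub>R L (h x)) + (c + t *\<^sub>R (L c + e))"
      using h by (simp add: g_def linear_add[OF \<open>linear L\<close>] algebra_simps)
    have "g t ` V \<subseteq> Q"
      using small[OF that] VP by (auto simp: g_def Q_def inner_add_right algebra_simps)
    then have "g t ` P \<subseteq> Q"
      unfolding V(2) convex_hull_image_affine[OF lin aff[unfolded V(2)]]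
      by (intro hull_minimal) (simp_all add: Q_def convex_polyhedron_inner)
    then show ?thesis
      using lin aff by (auto simp: Hom_def g_def)
  qed
  have "f = (\<lambda>x. (1/2) *\<^sub>R g \<epsilon> x + (1/2) *\<^sub>R g (-\<epsilon>) x)"
  proof
    fix x
    show "f x = (1/2) *\<^sub>R g \<epsilon> x + (1/2) *\<^sub>R g (-\<epsilon>) x"
      using f by (cases "x \<in> P") (simp_all add: g_def Hom_def algebra_simps flip: scaleR_add_left)
  qed
  then have "g \<epsilon> = g (-\<epsilon>)"
    using vert_Hom_midpoint_eq[OF vert g_Hom[of \<epsilon>] g_Hom[of "-\<epsilon>"]] \<epsilon> by simp
  then have "\<epsilon> *\<^sub>R (L (f x) + e) = (-\<epsilon>) *\<^sub>R (L (f x) + e)"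
    using \<open>x \<in> P\<close> by (auto simp: g_def fun_eq_iff dest: spec[of _ x])
  then show ?thesis
    using \<epsilon> by (simp add: eq_neg_iff_add_eq_0 flip: scaleR_add_left)
qed

section \<open>Barycentric coordinates on the standard simplex\<close>

lemma sum_UNIV_option:
  "(\<Sum>l\<in>(UNIV::'a::finite option set). g l) = g None + (\<Sum>k\<in>UNIV. g (Some k))"
  by (simp add: UNIV_option_conv sum.reindex)

text \<open>The vertices of \<open>std_simplex\<close> are indexed by \<open>'n option\<close>, with \<open>None\<close> standing for
  the origin; \<open>bary l\<close> is the barycentric coordinate belonging to \<open>simplex_vertex l\<close>.\<close>

definition simplex_vertex :: "'n::finite option \<Rightarrow> real^'n" where
  "simplex_vertex l = (case l of None \<Rightarrow> 0 | Some k \<Rightarrow> axis k 1)"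

definition bary_normal :: "'n::finite option \<Rightarrow> real^'n" where
  "bary_normal l = (case l of None \<Rightarrow> - (\<Sum>k\<in>UNIV. axis k 1) | Some k \<Rightarrow> axis k 1)"

definition bary :: "'n::finite option \<Rightarrow> real^'n \<Rightarrow> real" where
  "bary l y = bary_normal l \<bullet> y + (if l = None then 1 else 0)"

lemma simplex_vertex_simps [simp]:
  "simplex_vertex None = 0" "simplex_vertex (Some k) = axis k 1"
  by (simp_all add: simplex_vertex_def)

lemma bary_None: "bary None y = 1 - (\<Sum>k\<in>UNIV. y $ k)"
  by (simp add: bary_def bary_normal_def inner_sum_left inner_axis')

lemma bary_Some: "bary (Some k) y = y $ k"
  by (simp add: bary_def bary_normal_def inner_axis')

lemma sum_bary: "(\<Sum>l\<in>UNIV. bary l y) = 1"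
  by (simp add: sum_UNIV_option bary_None bary_Some)

lemma sum_bary_scaleR_simplex_vertex: "(\<Sum>l\<in>UNIV. bary l y *\<^sub>R simplex_vertex l) = y"
  by (simp add: sum_UNIV_option bary_Some vec_eq_iff sum_component axis_def if_distrib
      sum.delta cong: if_cong)

lemma bary_simplex_vertex: "bary m (simplex_vertex l) = (if m = l then 1 else 0)"
  by (cases m; cases l) (auto simp: bary_None bary_Some axis_def sum.delta)

lemma affine_eq_sum_bary:
  "w \<bullet> y + b = (\<Sum>l\<in>UNIV. (w \<bullet> simplex_vertex l + b) * bary l y)"
proof -
  have "w \<bullet> y + b = (\<Sum>l\<in>UNIV. bary l y * (w \<bullet> simplex_vertex l)) + (\<Sum>l\<in>UNIV. bary l y) * b"
    by (subst (1) sum_bary_scaleR_simplex_vertex[of y, symmetric])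
       (simp add: sum_bary inner_sum_right)
  then show ?thesis
    by (simp add: sum_distrib_left sum.distrib algebra_simps)
qed

lemma std_simplex_eq_bary_nonneg: "std_simplex = {y. \<forall>l. 0 \<le> bary l y}"
proof -
  have Basis: "(Basis :: (real^'n) set) = range (\<lambda>k. axis k 1)"
    by (auto simp: Basis_vec_def)
  have "std_simplex = convex hull (insert 0 (Basis :: (real^'n) set))"
    by (simp add: std_simplex_def Basis full_SetCompr_eq)
  also have "\<dots> = {y. (\<forall>k. 0 \<le> y $ k) \<and> (\<Sum>k\<in>UNIV. y $ k) \<le> 1}"
    unfolding std_simplex by (simp add: Basis sum.reindex inj_on_def axis_eq_axis inner_axis)
  also have "\<dots> = {y. \<forall>l. 0 \<le> bary l y}"
    by (auto simp: split_option_all bary_None bary_Some)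
  finally show ?thesis .
qed

lemma inj_simplex_vertex: "inj simplex_vertex"
  by (auto simp: inj_def simplex_vertex_def axis_eq_axis split: option.splits)

lemma range_simplex_vertex: "range simplex_vertex = insert 0 {axis k 1 | k. True}"
  by (auto simp: simplex_vertex_def image_iff split: option.splits) (metis option.simps(5))

lemma std_simplex_eq_convex_hull: "std_simplex = convex hull (range simplex_vertex)"
  by (simp add: std_simplex_def range_simplex_vertex)

lemma affine_independent_simplex_vertex:
  "\<not> affine_dependent (simplex_vertex ` T :: (real^'n::finite) set)"
proof -
  have "\<not> affine_dependent (insert 0 (Basis :: (real^'n) set))"
    by (simp add: affine_dependent_iff_dependent independent_Basis zero_not_in_Basis)
  moreover have "simplex_vertex ` T \<subseteq> insert 0 Basis"
    by (auto simp: simplex_vertex_def Basis_vec_def split: option.splits)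
  ultimately show ?thesis
    using affine_independent_subset by blast
qed

lemma aff_dim_simplex_vertex:
  "aff_dim (simplex_vertex ` T :: (real^'n::finite) set) = int (card T) - 1"
proof -
  have "card (simplex_vertex ` T) = card T"
    by (rule card_image[OF inj_on_subset[OF inj_simplex_vertex]]) simp
  then show ?thesis
    using aff_dim_affine_independent[OF affine_independent_simplex_vertex, of T] by simp
qed

lemma mem_convex_hull_simplex_vertex:
  assumes "\<forall>l. 0 \<le> bary l y" "\<forall>l. l \<notin> T \<longrightarrow> bary l y = 0"
  shows "y \<in> convex hull (simplex_vertex ` T)"
proof -
  have "(\<Sum>l\<in>T. bary l y *\<^sub>R simplex_vertex l) = y"
    using sum.mono_neutral_left[of UNIV T "\<lambda>l. bary l y *\<^sub>R simplex_vertex l"] assms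
      sum_bary_scaleR_simplex_vertex by simp
  moreover have "(\<Sum>l\<in>T. bary l y) = 1"
    using sum.mono_neutral_left[of UNIV T "\<lambda>l. bary l y"] assms sum_bary by simp
  moreover have "(\<Sum>l\<in>T. bary l y *\<^sub>R simplex_vertex l) \<in> convex hull (simplex_vertex ` T)"
    by (rule convex_sum) (use assms \<open>(\<Sum>l\<in>T. bary l y) = 1\<close> in \<open>auto intro: hull_inc\<close>)
  ultimately show ?thesis
    by simp
qed

lemma bary_eq_inner: "bary l y = bary_normal l \<bullet> y + bary l 0"
  by (simp add: bary_def)

lemma std_simplex_eq_polyhedron:
  "std_simplex = {y. \<forall>l\<in>UNIV. 0 \<le> bary_normal l \<bullet> y + bary l 0}"
  by (simp add: std_simplex_eq_bary_nonneg flip: bary_eq_inner)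

lemma bary_normal_inner_edge:
  "bary_normal m \<bullet> (simplex_vertex l - simplex_vertex j)
     = (if m = l then 1 else 0) - (if m = j then 1 else 0)"
  using bary_eq_inner[of m "simplex_vertex l"] bary_eq_inner[of m "simplex_vertex j"]
  by (simp add: inner_diff_right bary_simplex_vertex)

section \<open>Vertices of Hom into the standard simplex\<close>

lemma vert_std_simplex_vanishing_at_vertex:
  fixes f :: "'a::euclidean_space \<Rightarrow> real^'n::finite"
  assumes "polytope P" "f \<in> vert P std_simplex"
    and vanish: "\<And>x. x \<in> P \<Longrightarrow> bary j (f x) = 0 \<Longrightarrow> w \<bullet> f x + b = 0"
    and "i \<noteq> j" "x0 \<in> P" "bary i (f x0) \<noteq> 0"
  shows "w \<bullet> simplex_vertex i + b = 0"
proof -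
  define c where "c l = w \<bullet> simplex_vertex l + b" for l
  define L where
    "L y = (\<Sum>l\<in>UNIV. (c l * (bary_normal l \<bullet> y)) *\<^sub>R (simplex_vertex l - simplex_vertex j))"
    for y
  define e where "e = (\<Sum>l\<in>UNIV. (c l * bary l 0) *\<^sub>R (simplex_vertex l - simplex_vertex j))"
  have "linear L"
    unfolding L_def
    by (intro linear_compose_sum ballI linearI) (simp_all add: inner_add_right algebra_simps)
  have "L y + e = (\<Sum>l\<in>UNIV. (c l * bary l y) *\<^sub>R (simplex_vertex l - simplex_vertex j))" for y
    unfolding L_def e_def
    by (subst bary_eq_inner) (simp add: sum.distrib[symmetric] algebra_simps flip: scaleR_add_left)
  then have "bary_normal m \<bullet> (L y + e)
      = (\<Sum>l\<in>UNIV. c l * bary l y * ((if m = l then 1 else 0) - (if m = j then 1 else 0)))"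
    for m y
    by (simp add: inner_sum_right bary_normal_inner_edge)
  also have "\<dots> m y = c m * bary m y - (if m = j then \<Sum>l\<in>UNIV. c l * bary l y else 0)" for m y
    by (simp add: right_diff_distrib sum_subtractf sum_distrib_right if_distrib[of "\<lambda>x. _ * x"]
        cong: if_cong)
  also have "(\<Sum>l\<in>UNIV. c l * bary l y) = w \<bullet> y + b" for y
    by (simp add: c_def affine_eq_sum_bary[of w y])
  finally have normal: "bary_normal m \<bullet> (L y + e) = c m * bary m y - (if m = j then w \<bullet> y + b else 0)"
    for m y .
  have "L (f x0) + e = 0"
  proof (rule vert_Hom_tangent_direction_eq_0[of P UNIV f bary_normal "\<lambda>l. bary l 0"])
    show "f \<in> vert P {y. \<forall>l\<in>UNIV. 0 \<le> bary_normal l \<bullet> y + bary l 0}"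
      using assms(2) by (simp add: std_simplex_eq_polyhedron)
    show "bary_normal l \<bullet> (L (f x) + e) = 0"
      if "x \<in> P" "bary_normal l \<bullet> f x + bary l 0 = 0" for x l
      using that vanish normal[of l "f x"] by (auto simp flip: bary_eq_inner)
  qed (use assms \<open>linear L\<close> in auto)
  then have "c i * bary i (f x0) = 0"
    using normal[of i "f x0"] \<open>i \<noteq> j\<close> by simp
  then show ?thesis
    using \<open>bary i (f x0) \<noteq> 0\<close> by (simp add: c_def)
qed

text \<open>The vertices spanning the smallest face of \<open>std_simplex\<close> that contains \<open>f ` P\<close>.\<close>

definition bary_support :: "('a \<Rightarrow> real^'n::finite) \<Rightarrow> 'a set \<Rightarrow> 'n option set" where
  "bary_support f P = {l. \<exists>x\<in>P. bary l (f x) \<noteq> 0}"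

lemma image_Int_subset_convex_hull_support:
  assumes "f \<in> Hom P std_simplex"
  shows "f ` P \<inter> {y. \<forall>l\<in>T. bary l y = 0} \<subseteq> convex hull (simplex_vertex ` (bary_support f P - T))"
  using assms
  by (auto simp: Hom_def std_simplex_eq_bary_nonneg bary_support_def
      intro!: mem_convex_hull_simplex_vertex)

lemma vert_std_simplex_vertex_in_affine_hull:
  assumes "polytope P" "f \<in> vert P std_simplex"
    and "f ` P \<inter> {y. bary j y = 0} \<subseteq> Z" "i \<in> bary_support f P" "i \<noteq> j"
  shows "simplex_vertex i \<in> affine hull Z"
proof (rule ccontr)
  assume "simplex_vertex i \<notin> affine hull Z"
  then obtain w b where "\<forall>y\<in>Z. w \<bullet> y + b = 0" "w \<bullet> simplex_vertex i + b \<noteq> 0"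
    by (rule affine_hull_separation)
  moreover obtain x0 where "x0 \<in> P" "bary i (f x0) \<noteq> 0"
    using assms(4) by (auto simp: bary_support_def)
  ultimately show False
    using vert_std_simplex_vanishing_at_vertex[OF assms(1,2) _ assms(5)] assms(3) by blast
qed

lemma aff_dim_image_vert_std_simplex:
  assumes "polytope P" "f \<in> vert P std_simplex"
  shows "aff_dim (f ` P) = int (card (bary_support f P)) - 1"
proof (rule antisym)
  have "f ` P \<subseteq> convex hull (simplex_vertex ` bary_support f P)"
    using image_Int_subset_convex_hull_support[of f P "{}"] assms(2) by (simp add: vert_def)
  then show "aff_dim (f ` P) \<le> int (card (bary_support f P)) - 1"
    by (metis aff_dim_convex_hull aff_dim_simplex_vertex aff_dim_subset)
next
  have "simplex_vertex i \<in> affine hull (f ` P)" if "i \<in> bary_support f P" for i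
  proof -
    obtain j :: "'b option" where "i \<noteq> j"
      by (metis option.distinct(1))
    then show ?thesis
      by (intro vert_std_simplex_vertex_in_affine_hull[OF assms _ that]) auto
  qed
  then show "int (card (bary_support f P)) - 1 \<le> aff_dim (f ` P)"
    by (metis aff_dim_affine_hull aff_dim_simplex_vertex aff_dim_subset image_subsetI)
qed

lemma facet_of_image_vert_std_simplex:
  assumes "polytope P" "f \<in> vert P std_simplex"
    and "j \<in> bary_support f P" "bary_support f P - {j} \<noteq> {}"
  shows "f ` P \<inter> {y. bary j y = 0} facet_of f ` P"
proof -
  let ?S = "bary_support f P" and ?Z = "f ` P \<inter> {y. bary j y = 0}"
  have f: "f \<in> Hom P std_simplex"
    using assms(2) by (simp add: vert_def)
  have "convex (f ` P)"
    by (rule convex_image_Hom[OF assms(1) f])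
  have "0 \<le> bary_normal j \<bullet> f x + bary j 0" if "x \<in> P" for x
    using f that by (auto simp: Hom_def std_simplex_eq_polyhedron)
  then have "f ` P \<inter> {y. bary_normal j \<bullet> y = - bary j 0} face_of f ` P"
    by (intro face_of_Int_supporting_hyperplane_ge[OF \<open>convex (f ` P)\<close>]) fastforce
  moreover have "?Z = f ` P \<inter> {y. bary_normal j \<bullet> y = - bary j 0}"
    by (subst bary_eq_inner) auto
  ultimately have "?Z face_of f ` P"
    by simp
  moreover have "?Z \<noteq> f ` P"
    using assms(3) by (auto simp: bary_support_def)
  ultimately have "aff_dim ?Z < int (card ?S) - 1"
    using face_of_aff_dim_lt \<open>convex (f ` P)\<close> aff_dim_image_vert_std_simplex[OF assms(1,2)] by metis
  moreover have "simplex_vertex ` (?S - {j}) \<subseteq> affine hull ?Z"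
    using vert_std_simplex_vertex_in_affine_hull[OF assms(1,2) order.refl] by blast
  then have "int (card (?S - {j})) - 1 \<le> aff_dim ?Z"
    by (metis aff_dim_affine_hull aff_dim_simplex_vertex aff_dim_subset)
  moreover have "card (?S - {j}) = card ?S - 1"
    using assms(3) by simp
  moreover have "card (?S - {j}) > 0"
    using assms(4) by (metis card_gt_0_iff finite)
  ultimately show ?thesis
    using \<open>?Z face_of f ` P\<close> aff_dim_image_vert_std_simplex[OF assms(1,2)]
    by (auto simp: facet_of_def)
qed

lemma facet_of_convex_hull_simplex_vertex:
  assumes "F facet_of convex hull (simplex_vertex ` S)"
  obtains j where "j \<in> S" "S - {j} \<noteq> {}" "F = convex hull (simplex_vertex ` (S - {j}))"
proof -
  obtain j where j: "j \<in> S" "F = convex hull (simplex_vertex ` S - {simplex_vertex j})" "F \<noteq> {}"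
    using assms unfolding facet_of_convex_hull_affine_independent[OF affine_independent_simplex_vertex]
    by blast
  moreover have "simplex_vertex ` S - {simplex_vertex j} = simplex_vertex ` (S - {j})"
    using inj_simplex_vertex by (auto simp: inj_def)
  ultimately have "F = convex hull (simplex_vertex ` (S - {j}))"
    by simp
  moreover have "S - {j} \<noteq> {}"
    using \<open>F \<noteq> {}\<close> calculation by auto
  ultimately show ?thesis
    using that \<open>j \<in> S\<close> by blast
qed

theorem lemma3p3:
  fixes P :: "'a::euclidean_space set" and f :: "'a \<Rightarrow> real ^ 'n"
  assumes "polytope P" and "P \<noteq> {}"
    and "f \<in> vert P (std_simplex :: (real ^ 'n) set)"
  shows "\<exists>G. G face_of (std_simplex :: (real ^ 'n) set) \<and>
             aff_dim (f ` P) = aff_dim G \<and> f ` P \<subseteq> G \<and>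
             (\<forall>F. F facet_of G \<longrightarrow> (\<exists>E. E facet_of (f ` P) \<and> E \<subseteq> F))"
proof -
  let ?S = "bary_support f P"
  let ?G = "convex hull (simplex_vertex ` ?S)"
  have f: "f \<in> Hom P std_simplex"
    using assms(3) by (simp add: vert_def)
  have "?G face_of std_simplex"
    unfolding std_simplex_eq_convex_hull
      face_of_convex_hull_affine_independent[OF affine_independent_simplex_vertex]
    by (intro exI[of _ "simplex_vertex ` ?S"]) auto
  moreover have "aff_dim (f ` P) = aff_dim ?G"
    by (simp add: aff_dim_image_vert_std_simplex[OF assms(1,3)] aff_dim_convex_hull
        aff_dim_simplex_vertex)
  moreover have "f ` P \<subseteq> ?G"
    using image_Int_subset_convex_hull_support[OF f, of "{}"] by simp
  moreover have "\<exists>E. E facet_of f ` P \<and> E \<subseteq> F" if F: "F facet_of ?G" for F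
  proof -
    obtain j where j: "j \<in> ?S" "?S - {j} \<noteq> {}" "F = convex hull (simplex_vertex ` (?S - {j}))"
      using F by (rule facet_of_convex_hull_simplex_vertex)
    then show ?thesis
      using facet_of_image_vert_std_simplex[OF assms(1,3) j(1,2)]
        image_Int_subset_convex_hull_support[OF f, of "{j}"] by auto
  qed
  ultimately show ?thesis
    by blast
qed

end
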